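(* Let $I=(E,\mathcal C,c,p,\beta)$ be a BC instance, let $0<\varepsilon<\tfrac12$, and let $R\subseteq E$ be a strict representative set (SRS) of $I$ and $\varepsilon$. Then $R$ is a representative set of $I$ and $\varepsilon$.
   Context: Let $E$ be a finite ground set. A constraint on $E$ is either (i) a matching constraint: an undirected graph $\mathcal C=(V,E)$, whose feasible sets $\mathcal M=\mathcal M(\mathcal C)$ are the matchings of $\mathcal C$; or (ii) a matroid intersection constraint: a pair $\mathcal C=(\mathcal I_1,\mathcal I_2)$ where $(E,\mathcal I_1),(E,\mathcal I_2)$ are matroids given by independence oracles, with $\mathcal M(\mathcal C)=\mathcal I_1\cap\mathcal I_2$. A BC instance is $I=(E,\mathcal C,c,p,\beta)$ with $c,p:E\to\mathbb R_{\ge0}$, $\beta\in\mathbb R_{\ge 0}$; it is a BM instance if $\mathcal C$ is a matching constraint and a BI instance otherwise. A solution is $S\in\mathcal M(\mathcal C)$ with $c(S)\le\beta$ (with $f(S)=\sum_{e\in S}f(e)$); $\mathrm{OPT}(I)$ is the maximum of $p(S)$ over solutions. For $0<\varepsilon<\tfrac12$: $H=\{e\in E: p(e)>\varepsilon\,\mathrm{OPT}(I)\}$; $q(\varepsilon)=\lceil\varepsilon^{-1/\varepsilon}\rceil$; $\mathcal M_{\le q(\varepsilon)}=\{A\in\mathcal M(\mathcal C):|A|\le q(\varepsilon)\}$. A set $R\subseteq E$ is a representative set of $I$ and $\varepsilon$ if there is a solution $S$ of $I$ with $S\cap H\subseteq R$ and $p(S)\ge(1-4\varepsilon)\mathrm{OPT}(I)$.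 For $S\in\mathcal M_{\le q(\varepsilon)}$, a set $Z_S\subseteq E$ is a replacement of $S$ (for $I,\varepsilon$) if: (1) $(S\setminus H)\cup Z_S\in\mathcal M_{\le q(\varepsilon)}$; (2) $c(Z_S)\le c(S\cap H)$; (3) $p((S\setminus H)\cup Z_S)\ge(1-\varepsilon)p(S)$; (4) $|Z_S|\le|S\cap H|$. A set $R\subseteq E$ is a strict representative set (SRS) of $I$ and $\varepsilon$ if every $S\in\mathcal M_{\le q(\varepsilon)}$ has a replacement $Z_S\subseteq R$. *)

theory Defs
  imports Complex_Main
begin

definition matroid :: "'e set \<Rightarrow> 'e set set \<Rightarrow> bool" where
  "matroid E \<I> \<longleftrightarrow> finite E \<and> (\<forall>A\<in>\<I>. A \<subseteq> E) \<and> {} \<in> \<I> \<and>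
     (\<forall>A B. B \<in> \<I> \<longrightarrow> A \<subseteq> B \<longrightarrow> A \<in> \<I>) \<and>
     (\<forall>A B. A \<in> \<I> \<longrightarrow> B \<in> \<I> \<longrightarrow> card A < card B \<longrightarrow> (\<exists>x\<in>B - A. insert x A \<in> \<I>))"

text \<open>A constraint: either an undirected graph (V, E) given by the vertex set and the
  endpoint map of the edges (the ground set E is the edge set), or a pair of matroids.\<close>
datatype ('e, 'v) constraint =
    Matching "'v set" "'e \<Rightarrow> 'v set"
  | MatroidInt "'e set set" "'e set set"

fun valid_constraint :: "'e set \<Rightarrow> ('e, 'v) constraint \<Rightarrow> bool" where
  "valid_constraint E (Matching V ends) \<longleftrightarrow>
     finite E \<and> (\<forall>e\<in>E. ends e \<subseteq> V \<and> card (ends e) = 2) \<and> inj_on ends E"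
| "valid_constraint E (MatroidInt I1 I2) \<longleftrightarrow> matroid E I1 \<and> matroid E I2"

fun feasible :: "'e set \<Rightarrow> ('e, 'v) constraint \<Rightarrow> 'e set set" where
  "feasible E (Matching V ends) =
     {M. M \<subseteq> E \<and> (\<forall>e\<in>M. \<forall>f\<in>M. e \<noteq> f \<longrightarrow> ends e \<inter> ends f = {})}"
| "feasible E (MatroidInt I1 I2) = I1 \<inter> I2"

definition BC_instance ::
  "'e set \<Rightarrow> ('e, 'v) constraint \<Rightarrow> ('e \<Rightarrow> real) \<Rightarrow> ('e \<Rightarrow> real) \<Rightarrow> real \<Rightarrow> bool" where
  "BC_instance E C c p \<beta> \<longleftrightarrow> valid_constraint E C \<and>
     (\<forall>e\<in>E. c e \<ge> 0 \<and> p e \<ge> 0) \<and> \<beta> \<ge> 0"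

definition is_solution ::
  "'e set \<Rightarrow> ('e, 'v) constraint \<Rightarrow> ('e \<Rightarrow> real) \<Rightarrow> real \<Rightarrow> 'e set \<Rightarrow> bool" where
  "is_solution E C c \<beta> S \<longleftrightarrow> S \<in> feasible E C \<and> sum c S \<le> \<beta>"

definition OPT ::
  "'e set \<Rightarrow> ('e, 'v) constraint \<Rightarrow> ('e \<Rightarrow> real) \<Rightarrow> ('e \<Rightarrow> real) \<Rightarrow> real \<Rightarrow> real" where
  "OPT E C c p \<beta> = Max {sum p S | S. is_solution E C c \<beta> S}"

definition heavy ::
  "'e set \<Rightarrow> ('e, 'v) constraint \<Rightarrow> ('e \<Rightarrow> real) \<Rightarrow> ('e \<Rightarrow> real) \<Rightarrow> real \<Rightarrow> real \<Rightarrow> 'e set" where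
  "heavy E C c p \<beta> \<epsilon> = {e \<in> E. p e > \<epsilon> * OPT E C c p \<beta>}"

definition qeps :: "real \<Rightarrow> nat" where
  "qeps \<epsilon> = nat \<lceil>\<epsilon> powr (- 1 / \<epsilon>)\<rceil>"

definition M_le_q :: "'e set \<Rightarrow> ('e, 'v) constraint \<Rightarrow> real \<Rightarrow> 'e set set" where
  "M_le_q E C \<epsilon> = {A \<in> feasible E C. card A \<le> qeps \<epsilon>}"

definition representative_set ::
  "'e set \<Rightarrow> ('e, 'v) constraint \<Rightarrow> ('e \<Rightarrow> real) \<Rightarrow> ('e \<Rightarrow> real) \<Rightarrow> real \<Rightarrow> real \<Rightarrow> 'e set \<Rightarrow> bool" where
  "representative_set E C c p \<beta> \<epsilon> R \<longleftrightarrow> R \<subseteq> E \<and>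
     (\<exists>S. is_solution E C c \<beta> S \<and> S \<inter> heavy E C c p \<beta> \<epsilon> \<subseteq> R \<and>
          sum p S \<ge> (1 - 4 * \<epsilon>) * OPT E C c p \<beta>)"

definition replacement ::
  "'e set \<Rightarrow> ('e, 'v) constraint \<Rightarrow> ('e \<Rightarrow> real) \<Rightarrow> ('e \<Rightarrow> real) \<Rightarrow> real \<Rightarrow> real \<Rightarrow> 'e set \<Rightarrow> 'e set \<Rightarrow> bool" where
  "replacement E C c p \<beta> \<epsilon> S Z \<longleftrightarrow>
     (let H = heavy E C c p \<beta> \<epsilon> in
       Z \<subseteq> E \<and>
       (S - H) \<union> Z \<in> M_le_q E C \<epsilon> \<and>
       sum c Z \<le> sum c (S \<inter> H) \<and>
       sum p ((S - H) \<union> Z) \<ge> (1 - \<epsilon>) * sum p S \<and>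
       card Z \<le> card (S \<inter> H))"

definition strict_representative_set ::
  "'e set \<Rightarrow> ('e, 'v) constraint \<Rightarrow> ('e \<Rightarrow> real) \<Rightarrow> ('e \<Rightarrow> real) \<Rightarrow> real \<Rightarrow> real \<Rightarrow> 'e set \<Rightarrow> bool" where
  "strict_representative_set E C c p \<beta> \<epsilon> R \<longleftrightarrow> R \<subseteq> E \<and>
     (\<forall>S \<in> M_le_q E C \<epsilon>. \<exists>Z. Z \<subseteq> R \<and> replacement E C c p \<beta> \<epsilon> S Z)"

end

theory Submission
  imports Defs
begin

text \<open>Take an optimal solution \<open>S\<^sub>0\<close> and let \<open>S\<close> be its elements of profit above \<open>\<epsilon>\<^sup>2 OPT\<close>;
  there are at most \<open>\<epsilon>\<^sup>-\<^sup>2 \<le> q(\<epsilon>)\<close> of them. The strict representative set replaces the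
  heavy elements of \<open>S\<close> by a set \<open>Z \<subseteq> R\<close> of at most \<open>1/\<epsilon>\<close> elements and no larger cost,
  losing at most \<open>\<epsilon> OPT\<close>. An exchange argument, valid for matchings and for matroid
  intersections alike, then puts back all but \<open>2|Z|\<close> of the light elements \<open>S\<^sub>0 - S\<close>,
  losing at most \<open>2 \<epsilon> OPT\<close> more.\<close>

lemma matroid_subset_closed: "matroid E I \<Longrightarrow> B \<in> I \<Longrightarrow> A \<subseteq> B \<Longrightarrow> A \<in> I"
  unfolding matroid_def by blast

lemma matroid_indep_finite: "matroid E I \<Longrightarrow> A \<in> I \<Longrightarrow> finite A"
  unfolding matroid_def by (meson finite_subset)

lemma matroid_augment:
  "matroid E I \<Longrightarrow> A \<in> I \<Longrightarrow> B \<in> I \<Longrightarrow> card A < card B \<Longrightarrow> \<exists>x\<in>B - A. insert x A \<in> I"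
  unfolding matroid_def by blast

lemma matroid_extend_to_card:
  assumes m: "matroid E I" and W: "W \<in> I" and A: "A \<in> I"
  shows "\<exists>X. W \<subseteq> X \<and> X \<subseteq> W \<union> A \<and> X \<in> I \<and> card A \<le> card X"
  using W
proof (induction "card A - card W" arbitrary: W)
  case 0
  then show ?case by auto
next
  case (Suc n)
  then have "card W < card A" by simp
  then obtain x where x: "x \<in> A - W" "insert x W \<in> I"
    using matroid_augment[OF m Suc.prems A] by blast
  have "card (insert x W) = Suc (card W)"
    using x matroid_indep_finite[OF m Suc.prems] by simp
  then have "n = card A - card (insert x W)" using Suc.hyps(2) by simp
  then obtain X where "insert x W \<subseteq> X" "X \<subseteq> insert x W \<union> A" "X \<in> I" "card A \<le> card X"
    using Suc.hyps(1) x(2) by blast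
  then show ?case using x(1) by auto
qed

lemma matroid_exchange:
  assumes m: "matroid E I" and BZ: "B \<union> Z \<in> I" and BT: "B \<union> T \<in> I" and "B \<inter> T = {}"
  shows "\<exists>T'. T' \<subseteq> T \<and> T' \<inter> (B \<union> Z) = {} \<and> B \<union> Z \<union> T' \<in> I \<and> card (T - T') \<le> card Z"
proof -
  obtain X where X: "B \<union> Z \<subseteq> X" "X \<subseteq> B \<union> Z \<union> T" "X \<in> I" "card (B \<union> T) \<le> card X"
    using matroid_extend_to_card[OF m BZ BT] by auto
  define T' where "T' = X - (B \<union> Z)"
  have fin: "finite (B \<union> Z)" "finite T" "finite T'"
    using matroid_indep_finite[OF m] BZ BT X(3) T'_def by auto
  have X_eq: "X = B \<union> Z \<union> T'" and "T' \<subseteq> T" and disj: "T' \<inter> (B \<union> Z) = {}"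
    using X(1,2) T'_def by auto
  have "card X = card (B \<union> Z) + card T'"
    unfolding X_eq using fin disj by (simp add: card_Un_disjoint Int_commute)
  moreover have "card (B \<union> T) = card B + card T"
    using fin \<open>B \<inter> T = {}\<close> by (simp add: card_Un_disjoint)
  moreover have "card (B \<union> Z) \<le> card B + card Z"
    by (rule card_Un_le)
  moreover have "card (T - T') = card T - card T'"
    using \<open>T' \<subseteq> T\<close> fin by (simp add: card_Diff_subset)
  ultimately have "card (T - T') \<le> card Z"
    using X(4) by linarith
  moreover have "B \<union> Z \<union> T' \<in> I" using X(3) X_eq by simp
  ultimately show ?thesis using \<open>T' \<subseteq> T\<close> disj by (intro exI[of _ T'] conjI)
qed

definition matching :: "('e \<Rightarrow> 'v set) \<Rightarrow> 'e set \<Rightarrow> bool" where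
  "matching ends M \<longleftrightarrow> (\<forall>e\<in>M. \<forall>f\<in>M. e \<noteq> f \<longrightarrow> ends e \<inter> ends f = {})"

text \<open>The edges of \<open>T\<close> touching a vertex of \<open>Z\<close> inject into the at most \<open>2|Z|\<close> vertices
  covered by \<open>Z\<close>, because \<open>T\<close> is itself a matching.\<close>
lemma matching_exchange:
  assumes BZ: "matching ends (B \<union> Z)" and BT: "matching ends (B \<union> T)" and "B \<inter> T = {}"
    and "finite Z" and two: "\<forall>e\<in>Z. card (ends e) = 2"
  shows "\<exists>T'. T' \<subseteq> T \<and> T' \<inter> (B \<union> Z) = {} \<and> matching ends (B \<union> Z \<union> T') \<and>
    card (T - T') \<le> 2 * card Z"
proof -
  define V where "V = (\<Union>z\<in>Z. ends z)"
  define T' where "T' = {e \<in> T. ends e \<inter> V = {}}"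
  have "\<forall>e\<in>Z. ends e \<noteq> {}" using two by force
  then have disj: "T' \<inter> (B \<union> Z) = {}"
    using \<open>B \<inter> T = {}\<close> unfolding T'_def V_def by blast
  have cross: "ends e \<inter> ends f = {}" if "e \<in> T'" "f \<in> Z" for e f
    using that unfolding T'_def V_def by blast
  have "matching ends (B \<union> Z \<union> T')"
    unfolding matching_def
  proof (intro ballI impI)
    fix e f assume e: "e \<in> B \<union> Z \<union> T'" and f: "f \<in> B \<union> Z \<union> T'" and "e \<noteq> f"
    have "T' \<subseteq> T" unfolding T'_def by blast
    then consider "e \<in> B \<union> Z" "f \<in> B \<union> Z" | "e \<in> B \<union> T" "f \<in> B \<union> T"
      | "e \<in> T'" "f \<in> Z" | "e \<in> Z" "f \<in> T'"
      using e f by blast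
    then show "ends e \<inter> ends f = {}"
      using BZ BT cross \<open>e \<noteq> f\<close> unfolding matching_def by cases blast+
  qed
  define g where "g e = (SOME v. v \<in> ends e \<inter> V)" for e
  have g: "g e \<in> ends e \<inter> V" if "e \<in> T - T'" for e
  proof -
    have "\<exists>v. v \<in> ends e \<inter> V" using that unfolding T'_def by blast
    then show ?thesis unfolding g_def by (rule someI_ex)
  qed
  have "\<forall>z\<in>Z. finite (ends z)"
    using two by (metis card.infinite zero_neq_numeral)
  then have "finite V" unfolding V_def using \<open>finite Z\<close> by blast
  have "inj_on g (T - T')"
  proof (rule inj_onI)
    fix e f assume "e \<in> T - T'" "f \<in> T - T'" "g e = g f"
    then have "g e \<in> ends e \<inter> ends f" using g by (metis IntD1 IntI)
    moreover have "e \<in> B \<union> T" "f \<in> B \<union> T" using \<open>e \<in> T - T'\<close> \<open>f \<in> T - T'\<close> by auto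
    ultimately show "e = f" using BT unfolding matching_def by blast
  qed
  moreover have "g ` (T - T') \<subseteq> V" using g by blast
  ultimately have "card (T - T') \<le> card V" using \<open>finite V\<close> by (rule card_inj_on_le)
  also have "\<dots> \<le> (\<Sum>z\<in>Z. card (ends z))" unfolding V_def using \<open>finite Z\<close> by (rule card_UN_le)
  also have "\<dots> = 2 * card Z" using two by simp
  finally show ?thesis
    using disj \<open>matching ends (B \<union> Z \<union> T')\<close> by (intro exI[of _ T']) (auto simp: T'_def)
qed

lemma valid_constraint_finite: "valid_constraint E C \<Longrightarrow> finite E"
  by (cases C) (auto simp: matroid_def)

lemma feasible_subset_ground: "valid_constraint E C \<Longrightarrow> A \<in> feasible E C \<Longrightarrow> A \<subseteq> E"
  by (cases C) (auto simp: matroid_def)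

lemma empty_feasible: "valid_constraint E C \<Longrightarrow> {} \<in> feasible E C"
  by (cases C) (auto simp: matroid_def)

lemma feasible_subset_closed:
  "valid_constraint E C \<Longrightarrow> B \<in> feasible E C \<Longrightarrow> A \<subseteq> B \<Longrightarrow> A \<in> feasible E C"
  by (cases C) (simp; blast intro: matroid_subset_closed)+

lemma feasible_exchange:
  assumes v: "valid_constraint E C" and BZ: "B \<union> Z \<in> feasible E C"
    and BT: "B \<union> T \<in> feasible E C" and d: "B \<inter> T = {}"
  shows "\<exists>T'. T' \<subseteq> T \<and> T' \<inter> (B \<union> Z) = {} \<and> B \<union> Z \<union> T' \<in> feasible E C \<and>
    card (T - T') \<le> 2 * card Z"
proof (cases C)
  case (Matching V ends)
  have BZ': "B \<union> Z \<subseteq> E" "matching ends (B \<union> Z)" and BT': "B \<union> T \<subseteq> E" "matching ends (B \<union> T)"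
    using BZ BT Matching by (simp_all add: matching_def)
  then have "finite Z" using valid_constraint_finite[OF v] by (meson finite_subset le_sup_iff)
  moreover have "\<forall>e\<in>Z. card (ends e) = 2" using v BZ'(1) Matching by auto
  ultimately obtain T' where T': "T' \<subseteq> T" "T' \<inter> (B \<union> Z) = {}"
      "matching ends (B \<union> Z \<union> T')" "card (T - T') \<le> 2 * card Z"
    using matching_exchange[OF BZ'(2) BT'(2) d] by blast
  moreover have "B \<union> Z \<union> T' \<subseteq> E" using BZ'(1) BT'(1) T'(1) by blast
  ultimately show ?thesis using Matching unfolding matching_def by auto
next
  case (MatroidInt I1 I2)
  then have m: "matroid E I1" "matroid E I2" and F: "B \<union> Z \<in> I1" "B \<union> T \<in> I1" "B \<union> Z \<in> I2" "B \<union> T \<in> I2"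
    using v BZ BT by simp_all
  obtain T1 where T1: "T1 \<subseteq> T" "T1 \<inter> (B \<union> Z) = {}" "B \<union> Z \<union> T1 \<in> I1" "card (T - T1) \<le> card Z"
    using matroid_exchange[OF m(1) F(1,2) d] by blast
  obtain T2 where T2: "T2 \<subseteq> T" "T2 \<inter> (B \<union> Z) = {}" "B \<union> Z \<union> T2 \<in> I2" "card (T - T2) \<le> card Z"
    using matroid_exchange[OF m(2) F(3,4) d] by blast
  have "B \<union> Z \<union> (T1 \<inter> T2) \<in> I1" by (rule matroid_subset_closed[OF m(1) T1(3)]) blast
  moreover have "B \<union> Z \<union> (T1 \<inter> T2) \<in> I2" by (rule matroid_subset_closed[OF m(2) T2(3)]) blast
  moreover have "card (T - T1 \<inter> T2) \<le> card (T - T1) + card (T - T2)"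
    using card_Un_le[of "T - T1" "T - T2"] by (simp add: Diff_Int)
  moreover have "T1 \<inter> T2 \<subseteq> T" "T1 \<inter> T2 \<inter> (B \<union> Z) = {}" using T1(1,2) by blast+
  ultimately show ?thesis using T1(4) T2(4) MatroidInt by (intro exI[of _ "T1 \<inter> T2"]) simp
qed

lemma is_solution_empty: "BC_instance E C c p \<beta> \<Longrightarrow> is_solution E C c \<beta> {}"
  by (simp add: BC_instance_def is_solution_def empty_feasible)

lemma solution_subset_ground:
  "BC_instance E C c p \<beta> \<Longrightarrow> is_solution E C c \<beta> S \<Longrightarrow> S \<subseteq> E \<and> finite S"
  by (meson BC_instance_def feasible_subset_ground is_solution_def rev_finite_subset
      valid_constraint_finite)

lemma OPT_attained:
  assumes "BC_instance E C c p \<beta>"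
  obtains S where "is_solution E C c \<beta> S" "sum p S = OPT E C c p \<beta>"
proof -
  have v: "valid_constraint E C" using assms by (simp add: BC_instance_def)
  let ?values = "{sum p S | S. is_solution E C c \<beta> S}"
  have "?values \<subseteq> sum p ` Pow E"
    using feasible_subset_ground[OF v] by (auto simp: is_solution_def)
  then have "finite ?values"
    using valid_constraint_finite[OF v] by (meson finite_Pow_iff finite_imageI finite_subset)
  moreover have "?values \<noteq> {}" using is_solution_empty[OF assms] by blast
  ultimately have "OPT E C c p \<beta> \<in> ?values" unfolding OPT_def by (rule Max_in)
  then show ?thesis using that by auto
qed

lemma OPT_nonneg:
  assumes "BC_instance E C c p \<beta>"
  shows "0 \<le> OPT E C c p \<beta>"
proof -
  obtain S where S: "is_solution E C c \<beta> S" "sum p S = OPT E C c p \<beta>"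
    using OPT_attained[OF assms] .
  then have "\<forall>e\<in>S. 0 \<le> p e"
    using solution_subset_ground[OF assms S(1)] assms by (auto simp: BC_instance_def)
  then show ?thesis using S(2) sum_nonneg by metis
qed

lemma card_above_fraction_le:
  fixes f :: "'a \<Rightarrow> real"
  assumes "finite A" "\<forall>x\<in>A. 0 \<le> f x" "sum f A \<le> M" "B \<subseteq> A" "\<forall>x\<in>B. s * M < f x"
    and "0 < s" "0 < M"
  shows "real (card B) \<le> 1 / s"
proof -
  have "real (card B) * (s * M) \<le> sum f B"
    using assms(5) by (intro sum_bounded_below) (simp add: less_imp_le)
  also have "\<dots> \<le> M" using assms(1-4) sum_mono2[of A B f] by force
  finally have "(real (card B) * s) * M \<le> 1 * M" by (simp add: mult.assoc)
  then show ?thesis using assms(6,7) by (simp add: field_simps)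
qed

lemma inverse_square_le_qeps:
  assumes "0 < \<epsilon>" "\<epsilon> \<le> 1 / 2"
  shows "1 / \<epsilon>\<^sup>2 \<le> real (qeps \<epsilon>)"
proof -
  have "1 / \<epsilon>\<^sup>2 = (1 / \<epsilon>) powr 2" using assms(1) by (simp add: powr_numeral power_one_over)
  also have "\<dots> \<le> (1 / \<epsilon>) powr (1 / \<epsilon>)"
    using assms by (intro powr_mono) (simp_all add: field_simps)
  also have "\<dots> = \<epsilon> powr (- 1 / \<epsilon>)" using assms(1) by (simp add: powr_divide powr_minus_divide)
  also have "\<dots> \<le> real (qeps \<epsilon>)" unfolding qeps_def by linarith
  finally show ?thesis .
qed

text \<open>Only the heavy part \<open>S \<inter> H\<close> of \<open>S\<close> is replaced; the light elements \<open>S\<^sub>0 - S\<close>, each worth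
  at most \<open>\<delta>\<close>, are restored by \<open>feasible_exchange\<close> up to \<open>2|Z|\<close> of them.\<close>
lemma replacement_completion:
  fixes c p :: "'e \<Rightarrow> real" and \<epsilon> \<delta> :: real
  assumes v: "valid_constraint E C" and nonneg: "\<forall>e\<in>E. 0 \<le> c e \<and> 0 \<le> p e"
    and S0: "is_solution E C c \<beta> S0" and "S \<subseteq> S0"
    and "Z \<subseteq> E" and BZ: "(S - H) \<union> Z \<in> feasible E C" and cZ: "sum c Z \<le> sum c (S \<inter> H)"
    and pZ: "(1 - \<epsilon>) * sum p S \<le> sum p ((S - H) \<union> Z)"
    and light: "\<forall>e\<in>S0 - S. p e \<le> \<delta>" and "0 \<le> \<delta>"
  shows "\<exists>X. is_solution E C c \<beta> X \<and> X \<subseteq> (S - H) \<union> Z \<union> (S0 - S) \<and>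
    sum p S0 - \<epsilon> * sum p S - 2 * card Z * \<delta> \<le> sum p X"
proof -
  define B T where "B = S - H" and "T = S0 - S"
  have S0F: "S0 \<in> feasible E C" and "sum c S0 \<le> \<beta>" using S0 by (simp_all add: is_solution_def)
  have "B \<union> T \<subseteq> S0" using \<open>S \<subseteq> S0\<close> unfolding B_def T_def by blast
  with S0F have BT: "B \<union> T \<in> feasible E C" by (rule feasible_subset_closed[OF v])
  have "S0 \<subseteq> E" by (rule feasible_subset_ground[OF v S0F])
  then have fin: "finite S0" "finite Z" and "T \<subseteq> E"
    using valid_constraint_finite[OF v] \<open>Z \<subseteq> E\<close> unfolding T_def by (auto dest: finite_subset)
  then obtain T' where T': "T' \<subseteq> T" "T' \<inter> (B \<union> Z) = {}" "B \<union> Z \<union> T' \<in> feasible E C"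
      "card (T - T') \<le> 2 * card Z"
    using feasible_exchange[OF v BZ[folded B_def] BT] unfolding B_def T_def by blast
  have fin': "finite S" "finite T" "finite T'"
    using fin \<open>S \<subseteq> S0\<close> T'(1) unfolding T_def by (auto intro: finite_subset)
  have split: "sum f (B \<union> Z \<union> T') = sum f (B \<union> Z) + sum f T'"
    "sum f S0 = sum f S + sum f T" for f :: "'e \<Rightarrow> real"
    using fin fin' T'(2) sum.subset_diff[OF \<open>S \<subseteq> S0\<close> fin(1), of f] unfolding B_def T_def
    by (auto simp: Int_commute intro: sum.union_disjoint)
  have "sum c (B \<union> Z) \<le> sum c B + sum c Z"
    using sum.union_inter[of B Z c] sum_nonneg[of "B \<inter> Z" c] fin fin' nonneg \<open>Z \<subseteq> E\<close>
    unfolding B_def by force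
  moreover have "sum c T' \<le> sum c T"
    using fin'(2) T'(1) nonneg \<open>T \<subseteq> E\<close> by (intro sum_mono2) auto
  moreover have "sum c B + sum c (S \<inter> H) = sum c S"
    using sum.Int_Diff[OF fin'(1), of c H] unfolding B_def by simp
  ultimately have cost: "sum c (B \<union> Z \<union> T') \<le> \<beta>"
    using split[of c] cZ \<open>sum c S0 \<le> \<beta>\<close> by linarith
  have "sum p (T - T') \<le> real (card (T - T')) * \<delta>"
    using light sum_bounded_above[of "T - T'" p \<delta>] unfolding T_def by auto
  also have "\<dots> \<le> 2 * card Z * \<delta>" using T'(4) \<open>0 \<le> \<delta>\<close> by (intro mult_right_mono) auto
  finally have "sum p T - sum p T' \<le> 2 * card Z * \<delta>"
    using sum.subset_diff[OF T'(1) fin'(2), of p] by simp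
  then have "sum p S0 - \<epsilon> * sum p S - 2 * card Z * \<delta> \<le> sum p (B \<union> Z \<union> T')"
    using split[of p] pZ unfolding B_def by (simp add: algebra_simps)
  moreover have "B \<union> Z \<union> T' \<subseteq> (S - H) \<union> Z \<union> (S0 - S)" using T'(1) unfolding B_def T_def by blast
  ultimately show ?thesis using cost T'(3) unfolding is_solution_def by blast
qed

lemma large_part_in_M_le_q:
  assumes I: "BC_instance E C c p \<beta>" and S0: "is_solution E C c \<beta> S0"
    and "sum p S0 = OPT E C c p \<beta>" "0 < OPT E C c p \<beta>" and "0 < \<epsilon>" "\<epsilon> \<le> 1 / 2"
  shows "{e \<in> S0. \<epsilon>\<^sup>2 * OPT E C c p \<beta> < p e} \<in> M_le_q E C \<epsilon>" (is "?S \<in> _")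
proof -
  have "S0 \<subseteq> E" "finite S0" using solution_subset_ground[OF I S0] by auto
  moreover have "\<forall>e\<in>E. 0 \<le> p e" using I by (simp add: BC_instance_def)
  ultimately have "real (card ?S) \<le> 1 / \<epsilon>\<^sup>2"
    using assms(3-5) by (intro card_above_fraction_le[of S0 p "OPT E C c p \<beta>"]) auto
  also have "\<dots> \<le> real (qeps \<epsilon>)" using inverse_square_le_qeps assms(5,6) .
  finally have "card ?S \<le> qeps \<epsilon>" by simp
  moreover have "?S \<in> feasible E C"
    using I S0 feasible_subset_closed[of E C S0 ?S]
    by (simp add: BC_instance_def is_solution_def subset_iff)
  ultimately show ?thesis unfolding M_le_q_def by simp
qed

lemma replacement_card_le:
  assumes I: "BC_instance E C c p \<beta>" and S0: "is_solution E C c \<beta> S0" "sum p S0 = OPT E C c p \<beta>"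
    and "0 < OPT E C c p \<beta>" "S \<subseteq> S0" "0 < \<epsilon>" and Z: "replacement E C c p \<beta> \<epsilon> S Z"
  shows "real (card Z) \<le> 1 / \<epsilon>"
proof -
  have "finite S0" "\<forall>e\<in>S0. 0 \<le> p e"
    using solution_subset_ground[OF I S0(1)] I by (auto simp: BC_instance_def)
  then have "real (card (S \<inter> heavy E C c p \<beta> \<epsilon>)) \<le> 1 / \<epsilon>"
    using S0(2) assms(4-6)
    by (intro card_above_fraction_le[of S0 p "OPT E C c p \<beta>" _ \<epsilon>]) (auto simp: heavy_def)
  moreover have "card Z \<le> card (S \<inter> heavy E C c p \<beta> \<epsilon>)"
    using Z by (simp add: replacement_def Let_def)
  ultimately show ?thesis by (meson of_nat_le_iff order_trans)
qed

lemma representative_set_of_replacement: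
  fixes c p :: "'e \<Rightarrow> real"
  assumes I: "BC_instance E C c p \<beta>" and "0 < \<epsilon>" "\<epsilon> < 1 / 2"
    and S0: "is_solution E C c \<beta> S0" "sum p S0 = OPT E C c p \<beta>" and "0 < OPT E C c p \<beta>"
    and S_def: "S = {e \<in> S0. \<epsilon>\<^sup>2 * OPT E C c p \<beta> < p e}"
    and "R \<subseteq> E" "Z \<subseteq> R" and Z: "replacement E C c p \<beta> \<epsilon> S Z"
  shows "representative_set E C c p \<beta> \<epsilon> R"
proof -
  define Opt H where "Opt = OPT E C c p \<beta>" and "H = heavy E C c p \<beta> \<epsilon>"
  have v: "valid_constraint E C" and nonneg: "\<forall>e\<in>E. 0 \<le> c e \<and> 0 \<le> p e"
    and "S0 \<subseteq> E" "finite S0"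
    using I solution_subset_ground[OF I S0(1)] by (auto simp: BC_instance_def)
  have Z': "Z \<subseteq> E" "(S - H) \<union> Z \<in> feasible E C" "sum c Z \<le> sum c (S \<inter> H)"
    "(1 - \<epsilon>) * sum p S \<le> sum p ((S - H) \<union> Z)"
    using Z unfolding replacement_def M_le_q_def H_def Let_def by blast+
  have p_nonneg: "\<forall>e\<in>S0. 0 \<le> p e" using nonneg \<open>S0 \<subseteq> E\<close> by blast
  have "S \<subseteq> S0" unfolding S_def by blast
  then have "real (card Z) * \<epsilon> \<le> 1"
    using replacement_card_le[OF I S0 assms(6) _ assms(2) Z] assms(2) by (simp add: field_simps)
  then have "2 * (real (card Z) * \<epsilon>) * (\<epsilon> * Opt) \<le> 2 * 1 * (\<epsilon> * Opt)"
    using assms(2,6) unfolding Opt_def by (intro mult_right_mono) auto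
  then have "2 * card Z * (\<epsilon>\<^sup>2 * Opt) \<le> 2 * (\<epsilon> * Opt)"
    by (simp add: power2_eq_square algebra_simps)
  moreover have "sum p S \<le> sum p S0"
    using \<open>finite S0\<close> p_nonneg by (intro sum_mono2) (auto simp: S_def)
  then have "\<epsilon> * sum p S \<le> \<epsilon> * Opt"
    using S0(2) assms(2) unfolding Opt_def by simp
  moreover have light: "\<forall>e\<in>S0 - S. p e \<le> \<epsilon>\<^sup>2 * Opt"
    unfolding S_def Opt_def by auto
  then obtain X where X: "is_solution E C c \<beta> X" "X \<subseteq> (S - H) \<union> Z \<union> (S0 - S)"
      "sum p S0 - \<epsilon> * sum p S - 2 * card Z * (\<epsilon>\<^sup>2 * Opt) \<le> sum p X"
    using replacement_completion[OF v nonneg S0(1) \<open>S \<subseteq> S0\<close> Z'(1-4) light] assms(6)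
    unfolding Opt_def by auto
  ultimately have "Opt - 3 * (\<epsilon> * Opt) \<le> sum p X"
    using S0(2) unfolding Opt_def by linarith
  moreover have "(1 - 4 * \<epsilon>) * Opt = Opt - 4 * (\<epsilon> * Opt)" "0 < \<epsilon> * Opt"
    using assms(2,6) unfolding Opt_def by (simp_all add: algebra_simps)
  ultimately have "(1 - 4 * \<epsilon>) * Opt \<le> sum p X" by linarith
  moreover have "\<epsilon>\<^sup>2 * Opt < \<epsilon> * Opt"
    using assms(2,3,6) unfolding Opt_def by (simp add: power2_eq_square)
  then have "X \<inter> H \<subseteq> R"
    using X(2) light \<open>Z \<subseteq> R\<close> unfolding H_def heavy_def Opt_def by force
  ultimately show ?thesis using X(1) \<open>R \<subseteq> E\<close>
    unfolding representative_set_def H_def Opt_def by blast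
qed

theorem mainTheorem3:
  fixes E :: "'e set" and C :: "('e, 'v) constraint"
    and c p :: "'e \<Rightarrow> real" and \<beta> \<epsilon> :: real and R :: "'e set"
  assumes "BC_instance E C c p \<beta>"
    and "0 < \<epsilon>" and "\<epsilon> < 1 / 2"
    and "strict_representative_set E C c p \<beta> \<epsilon> R"
  shows "representative_set E C c p \<beta> \<epsilon> R"
proof -
  have "R \<subseteq> E" using assms(4) by (simp add: strict_representative_set_def)
  obtain S0 where S0: "is_solution E C c \<beta> S0" "sum p S0 = OPT E C c p \<beta>"
    using OPT_attained[OF assms(1)] .
  show ?thesis
  proof (cases "OPT E C c p \<beta> = 0")
    case True
    then show ?thesis
      using is_solution_empty[OF assms(1)] \<open>R \<subseteq> E\<close> by (auto simp: representative_set_def)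
  next
    case False
    then have "0 < OPT E C c p \<beta>" using OPT_nonneg[OF assms(1)] by linarith
    define S where "S = {e \<in> S0. \<epsilon>\<^sup>2 * OPT E C c p \<beta> < p e}"
    have "S \<in> M_le_q E C \<epsilon>"
      unfolding S_def using large_part_in_M_le_q[OF assms(1) S0] assms(2,3) \<open>0 < OPT E C c p \<beta>\<close> by simp
    then obtain Z where "Z \<subseteq> R" "replacement E C c p \<beta> \<epsilon> S Z"
      using assms(4) unfolding strict_representative_set_def by blast
    then show ?thesis
      using representative_set_of_replacement[OF assms(1-3) S0 \<open>0 < OPT E C c p \<beta>\<close> S_def \<open>R \<subseteq> E\<close>]
      by blast
  qed
qed

end
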